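(* Let $A=(a_{i,j})$ be an $n\times n$ matrix with indeterminate entries. Let $A'=(a'_{i,j})$ be the matrix obtained from $A$ by replacing the entries $a_{i,n}$ of its last column by entries $\tilde a_{i,n}$ (rational functions of the $a_{k,\ell}$) such that for every $1\le k\le n$ \[ \det\begin{pmatrix} a_{k,k}&\cdots&a_{k,n-1}&\tilde a_{k,n}\\ \vdots&&\vdots&\vdots\\ a_{n,k}&\cdots&a_{n,n-1}&\tilde a_{n,n}\end{pmatrix}=(-1)^{n-k}\,a_{k,n}\,\det\begin{pmatrix} a_{k+1,k}&\cdots&a_{k+1,n-1}\\ \vdots&&\vdots\\ a_{n,k}&\cdots&a_{n,n-1}\end{pmatrix}.\] Let $A''=(a''_{i,j})$ be the $n\times(n-1)$ matrix obtained from $A$ by removing its last column. Then for every $1\le i\le n-1$, \[ \frac{\det\big((a'_{k,\ell})_{k\ge i,\,k\ne i+1;\ \ell>i}\big)}{\det\big((a'_{k,\ell})_{k,\ell>i}\big)}=\frac{a_{i,n}}{a_{i+1,n}}+\frac{\det\big((a''_{k,\ell})_{k\ge i,\,k\ne i+1;\ \ell>i-1}\big)}{\det\big((a''_{k,\ell})_{k>i;\ \ell>i-1}\big)} .\]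
   Context: Submatrices are formed with the indicated row and column index sets taken in increasing order; the determinant of an empty matrix is $1$. The identities are identities of rational functions in the indeterminates $a_{i,j}$. *)

theory Defs
  imports "Jordan_Normal_Form.Determinant"
begin

text \<open>Matrices with indices 1..n are represented as functions nat => nat => 'a.
  subdet M R C is the determinant of the submatrix of M with row index set R
  and column index set C, both taken in increasing order (R, C finite, of equal
  cardinality). The determinant of the empty matrix is 1.\<close>

definition subdet :: "(nat \<Rightarrow> nat \<Rightarrow> 'a::comm_ring_1) \<Rightarrow> nat set \<Rightarrow> nat set \<Rightarrow> 'a" where
  "subdet M R C =
     (let rs = sorted_list_of_set R; cs = sorted_list_of_set C
      in det (mat (length rs) (length rs) (\<lambda>(i, j). M (rs ! i) (cs ! j))))"

definition repl_last_col :: "nat \<Rightarrow> (nat \<Rightarrow> nat \<Rightarrow> 'a) \<Rightarrow> (nat \<Rightarrow> 'a) \<Rightarrow> nat \<Rightarrow> nat \<Rightarrow> 'a" where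
  "repl_last_col n A t = (\<lambda>i j. if j = n then t i else A i j)"

text \<open>The n x (n-1) matrix A'' obtained from A by removing the last column
  (entries with column index n are set to 0 and are never used).\<close>

definition drop_last_col :: "nat \<Rightarrow> (nat \<Rightarrow> nat \<Rightarrow> 'a::zero) \<Rightarrow> nat \<Rightarrow> nat \<Rightarrow> 'a" where
  "drop_last_col n A = (\<lambda>i j. if j < n then A i j else 0)"

end

theory Submission
  imports Defs
begin

text \<open>Apply the Desnanot--Jacobi identity to the block of A' on rows and columns i..n, with
  pivot rows i, i+1 and pivot columns i, n. The four minors that avoid column n are minors of A
  (and of A''); the two that contain it, the whole block and its trailing block, are given by the
  defining property of the tilde entries for k = i and k = i+1, which factors out a_{i,n} and
  a_{i+1,n}.\<close>

lemma det_2x2: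
  assumes "P \<in> carrier_mat 2 2"
  shows "det P = P $$ (0, 0) * P $$ (1, 1) - P $$ (0, 1) * P $$ (1, 0)"
proof -
  have "det P = (\<Sum>i<2. P $$ (i, 0) * cofactor P i 0)"
    by (rule laplace_expansion_column[OF assms], simp)
  also have "\<dots> = P $$ (0, 0) * cofactor P 0 0 + P $$ (1, 0) * cofactor P 1 0"
    by (simp add: numeral_2_eq_2)
  also have "cofactor P 0 0 = P $$ (1, 1)"
    unfolding cofactor_def using assms by (subst det_single) (auto simp: mat_delete_def)
  also have "cofactor P 1 0 = - P $$ (0, 1)"
    unfolding cofactor_def using assms by (subst det_single) (auto simp: mat_delete_def)
  finally show ?thesis by (simp add: algebra_simps)
qed

lemma mat_delete_mat_delete_00:
  assumes "M \<in> carrier_mat m m" "2 \<le> m"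
  shows "mat_delete (mat_delete M 0 0) 0 0 = mat (m - 2) (m - 2) (\<lambda>(p, q). M $$ (p + 2, q + 2))"
  using assms by (intro eq_matI) (auto simp: mat_delete_def)

lemma desnanot_jacobi_det_nonzero:
  fixes M :: "'a::idom mat"
  assumes M: "M \<in> carrier_mat m m" and m: "2 \<le> m" and nz: "det M \<noteq> 0"
  shows "det M * det (mat_delete (mat_delete M 0 0) 0 0) =
     det (mat_delete M 0 0) * det (mat_delete M 1 1) - det (mat_delete M 0 1) * det (mat_delete M 1 0)"
proof -
  have Suc_Suc_diff: "Suc (Suc (k - 2)) = k" if "\<not> k < 2" for k using that by simp
  text \<open>Multiplying M by the identity with its first two columns replaced by those of the
    adjugate gives a block triangular matrix with diagonal blocks (det M) I and the trailing
    block of M.\<close>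
  define X where "X = mat m m (\<lambda>(k, l). if l = 0 then cofactor M 0 k else if l = 1 then cofactor M 1 k
     else if k = l then 1 else 0)"
  define P where "P = mat 2 2 (\<lambda>(k, l). X $$ (k, l))"
  define Q where "Q = mat (m - 2) 2 (\<lambda>(k, l). X $$ (k + 2, l))"
  define R where "R = mat 2 (m - 2) (\<lambda>(k, l). M $$ (k, l + 2))"
  define L where "L = mat (m - 2) (m - 2) (\<lambda>(k, l). M $$ (k + 2, l + 2))"
  have X: "X \<in> carrier_mat m m" unfolding X_def by auto
  have X_blocks: "X = four_block_mat P (0\<^sub>m 2 (m - 2)) Q (1\<^sub>m (m - 2))"
    using m by (intro eq_matI) (auto simp: X_def P_def Q_def four_block_mat_def Suc_Suc_diff)
  have det_X: "det X = det P"
    by (subst X_blocks, subst det_four_block_mat_upper_right_zero[of _ 2 _ "m - 2"])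
      (auto simp: P_def Q_def)
  have det_P: "det P = det (mat_delete M 0 0) * det (mat_delete M 1 1)
      - det (mat_delete M 0 1) * det (mat_delete M 1 0)"
    using m by (subst det_2x2) (auto simp: P_def X_def cofactor_def algebra_simps)
  have MX_entry: "(M * X) $$ (k, l) = (if l = 0 then (if k = 0 then det M else 0) else if l = 1 then
      (if k = 1 then det M else 0) else M $$ (k, l))" if "k < m" "l < m" for k l
  proof -
    have adj: "(M * adj_mat M) $$ (k, r) = (\<Sum>j<m. M $$ (k, j) * cofactor M r j)" if "r < m" for r
      using that \<open>k < m\<close> M adj_mat(1)[OF M]
      by (auto simp: scalar_prod_def adj_mat_def intro!: sum.cong)
    have "(M * X) $$ (k, l) = (\<Sum>j<m. M $$ (k, j) * X $$ (j, l))"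
      using that M X by (auto simp: scalar_prod_def intro!: sum.cong)
    also have "\<dots> = (if l = 0 then (M * adj_mat M) $$ (k, 0) else if l = 1 then (M * adj_mat M) $$ (k, 1)
       else M $$ (k, l))"
      using m that adj by (auto simp: X_def if_distrib[of "\<lambda>x. _ * x"] cong: if_cong)
    finally show ?thesis using adj_mat(2)[OF M] that m by auto
  qed
  have MX_blocks: "M * X = four_block_mat (det M \<cdot>\<^sub>m 1\<^sub>m 2) R (0\<^sub>m (m - 2) 2) L"
    using M X m
    by (intro eq_matI) (auto simp: MX_entry R_def L_def four_block_mat_def Suc_Suc_diff
        simp del: index_mult_mat(1))
  have "det (M * X) = det M ^ 2 * det L"
    by (subst MX_blocks, subst det_four_block_mat_lower_left_zero[of _ 2 _ "m - 2"])
      (auto simp: R_def L_def)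
  moreover have "det (M * X) = det M * det P"
    using det_mult[OF M X] det_X by simp
  ultimately have "det M * det L = det P"
    using nz by (simp add: power2_eq_square)
  then show ?thesis
    using det_P mat_delete_mat_delete_00[OF M m] by (simp add: L_def)
qed

definition mat_add_corner :: "'a::comm_ring_1 \<Rightarrow> 'a mat \<Rightarrow> 'a mat" where
  "mat_add_corner s A =
     mat (dim_row A) (dim_col A) (\<lambda>(p, q). A $$ (p, q) + (if p = 0 \<and> q = 0 then s else 0))"

lemma mat_add_corner_carrier: "A \<in> carrier_mat n m \<Longrightarrow> mat_add_corner s A \<in> carrier_mat n m"
  by (simp add: mat_add_corner_def)

lemma det_mat_add_corner:
  assumes A: "A \<in> carrier_mat n n" and n: "0 < n"
  shows "det (mat_add_corner s A) = det A + s * det (mat_delete A 0 0)"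
proof -
  let ?B = "mat_add_corner s A"
  have "mat_delete ?B 0 j = mat_delete A 0 j" for j
    using A by (intro eq_matI) (auto simp: mat_add_corner_def mat_delete_def)
  then have cof: "cofactor ?B 0 j = cofactor A 0 j" for j
    by (simp add: cofactor_def)
  have "det ?B = (\<Sum>j<n. ?B $$ (0, j) * cofactor ?B 0 j)"
    by (rule laplace_expansion_row[OF mat_add_corner_carrier[OF A] n])
  also have "\<dots> = (\<Sum>j<n. A $$ (0, j) * cofactor A 0 j + (if j = 0 then s * cofactor A 0 0 else 0))"
    using A n unfolding cof by (intro sum.cong) (auto simp: mat_add_corner_def algebra_simps)
  also have "\<dots> = det A + s * cofactor A 0 0"
    by (simp add: sum.distrib laplace_expansion_row[OF A n] n)
  finally show ?thesis by (simp add: cofactor_def)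
qed

text \<open>If det M vanishes, adding 1 in the corner makes it equal to the nonzero pivot minor
  and changes both sides of the identity by the same term.\<close>

theorem desnanot_jacobi:
  fixes M :: "'a::idom mat"
  assumes M: "M \<in> carrier_mat m m" and m: "2 \<le> m" and nz: "det (mat_delete M 0 0) \<noteq> 0"
  shows "det M * det (mat_delete (mat_delete M 0 0) 0 0) =
     det (mat_delete M 0 0) * det (mat_delete M 1 1) - det (mat_delete M 0 1) * det (mat_delete M 1 0)"
proof (cases "det M = 0")
  case False
  then show ?thesis using desnanot_jacobi_det_nonzero[OF M m] by blast
next
  case True
  define M' where "M' = mat_add_corner 1 M"
  have M': "M' \<in> carrier_mat m m" using M by (simp add: M'_def mat_add_corner_carrier)
  have det_M': "det M' = det (mat_delete M 0 0)"
    using det_mat_add_corner[OF M, of 1] m True by (simp add: M'_def)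
  have same_minors: "mat_delete M' 0 0 = mat_delete M 0 0" "mat_delete M' 0 1 = mat_delete M 0 1"
      "mat_delete M' 1 0 = mat_delete M 1 0"
    using M by (auto simp: M'_def mat_add_corner_def mat_delete_def)
  have M'_11: "mat_delete M' 1 1 = mat_add_corner 1 (mat_delete M 1 1)"
    using M m by (intro eq_matI) (auto simp: M'_def mat_add_corner_def mat_delete_def)
  have "mat_delete (mat_delete M 1 1) 0 0 = mat_delete (mat_delete M 0 0) 0 0"
    using M m by (intro eq_matI) (auto simp: mat_delete_def)
  then have det_M'_11: "det (mat_delete M' 1 1)
      = det (mat_delete M 1 1) + det (mat_delete (mat_delete M 0 0) 0 0)"
    using M m unfolding M'_11 by (subst det_mat_add_corner[of _ "m - 1"]) auto
  have "det M' * det (mat_delete (mat_delete M' 0 0) 0 0) =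
     det (mat_delete M' 0 0) * det (mat_delete M' 1 1) - det (mat_delete M' 0 1) * det (mat_delete M' 1 0)"
    using desnanot_jacobi_det_nonzero[OF M' m] det_M' nz by simp
  then show ?thesis
    unfolding same_minors det_M'_11 det_M' True by (simp add: algebra_simps)
qed

lemma desnanot_jacobi_first_last_col:
  fixes C :: "'a::idom mat"
  assumes C: "C \<in> carrier_mat m m" and m: "2 \<le> m" and nz: "det (mat_delete C 0 (m - 1)) \<noteq> 0"
  shows "det C * det (mat_delete (mat_delete C 0 (m - 1)) 0 0) =
     det (mat_delete C 0 0) * det (mat_delete C 1 (m - 1))
     - det (mat_delete C 0 (m - 1)) * det (mat_delete C 1 0)"
proof -
  define M where "M = swap_col_to_front C (m - 1)"
  have M: "M \<in> carrier_mat m m"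
    using C m by (simp add: M_def swap_col_to_front_result)
  have M_entry: "M $$ (p, q) = C $$ (p, if q = 0 then m - 1 else q - 1)" if "p < m" "q < m" for p q
    using that m unfolding M_def by (subst swap_col_to_front_result[OF C]) auto
  have C_00: "mat_delete C 0 0 \<in> carrier_mat (m - 1) (m - 1)"
    and C_10: "mat_delete C 1 0 \<in> carrier_mat (m - 1) (m - 1)"
    using C by (auto intro: mat_delete_carrier)
  have M_00: "mat_delete M 0 0 = mat_delete C 0 (m - 1)"
    using M C m by (intro eq_matI) (auto simp: mat_delete_def M_entry)
  have M_10: "mat_delete M 1 0 = mat_delete C 1 (m - 1)"
    using M C m by (intro eq_matI) (auto simp: mat_delete_def M_entry)
  have m_pred: "Suc (m - 2) = m - 1" and "m - 2 < m - 1" using m by simp_all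
  have M_01: "mat_delete M 0 1 = swap_col_to_front (mat_delete C 0 0) (m - 2)"
    unfolding swap_col_to_front_result[OF C_00 \<open>m - 2 < m - 1\<close>]
    using M C m by (intro eq_matI) (auto simp: mat_delete_def M_entry m_pred)
  have M_11: "mat_delete M 1 1 = swap_col_to_front (mat_delete C 1 0) (m - 2)"
    unfolding swap_col_to_front_result[OF C_10 \<open>m - 2 < m - 1\<close>]
    using M C m by (intro eq_matI) (auto simp: mat_delete_def M_entry m_pred)
  define \<sigma> :: 'a where "\<sigma> = (-1) ^ (m - 2)"
  have sign_M: "(-1) ^ (m - 1) = - \<sigma>"
    unfolding \<sigma>_def m_pred[symmetric] by simp
  have "det M = - \<sigma> * det C"
    using swap_col_to_front_det[OF C, of "m - 1"] m sign_M by (simp add: M_def)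
  moreover have "det (mat_delete M 0 1) = \<sigma> * det (mat_delete C 0 0)"
    unfolding M_01 \<sigma>_def using m by (intro swap_col_to_front_det[OF C_00]) auto
  moreover have "det (mat_delete M 1 1) = \<sigma> * det (mat_delete C 1 0)"
    unfolding M_11 \<sigma>_def using m by (intro swap_col_to_front_det[OF C_10]) auto
  moreover have "det M * det (mat_delete (mat_delete M 0 0) 0 0) =
     det (mat_delete M 0 0) * det (mat_delete M 1 1) - det (mat_delete M 0 1) * det (mat_delete M 1 0)"
    using desnanot_jacobi[OF M m] nz M_00 by simp
  ultimately have "\<sigma> * (det C * det (mat_delete (mat_delete C 0 (m - 1)) 0 0)) =
     \<sigma> * (det (mat_delete C 0 0) * det (mat_delete C 1 (m - 1))
     - det (mat_delete C 0 (m - 1)) * det (mat_delete C 1 0))"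
    unfolding M_00 M_10 by (simp add: algebra_simps)
  moreover have "\<sigma> \<noteq> 0" by (simp add: \<sigma>_def)
  ultimately show ?thesis by simp
qed

lemma subdet_eq_det_mat:
  assumes "sorted xs" "distinct xs" "set xs = R" "sorted ys" "distinct ys" "set ys = C"
    "length xs = k" "length ys = k"
    "\<And>p. p < k \<Longrightarrow> xs ! p = f p" "\<And>q. q < k \<Longrightarrow> ys ! q = g q"
  shows "subdet M R C = det (mat k k (\<lambda>(p, q). M (f p) (g q)))"
proof -
  have "sorted_list_of_set R = xs" "sorted_list_of_set C = ys"
    using assms by (metis sorted_list_of_set_sort_remdups distinct_remdups_id sorted_sort_id)+
  then show ?thesis
    unfolding subdet_def Let_def using assms by (intro arg_cong[of _ _ det] eq_matI) auto
qed

lemma subdet_atLeastLessThan: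
  "subdet M {r..<r + k} {c..<c + k} = det (mat k k (\<lambda>(p, q). M (r + p) (c + q)))"
  by (rule subdet_eq_det_mat[where xs = "[r..<r + k]" and ys = "[c..<c + k]"]) auto

lemma subdet_skip_second_row:
  assumes "0 < k"
  shows "subdet M (insert r {r + 2..<r + k + 1}) {c..<c + k}
    = det (mat k k (\<lambda>(p, q). M (if p = 0 then r else r + p + 1) (c + q)))"
  using assms
  by (intro subdet_eq_det_mat[where xs = "r # [r + 2..<r + k + 1]" and ys = "[c..<c + k]"])
    (auto simp: nth_Cons' simp del: upt_Suc)

lemma subdet_cong:
  assumes "finite R" "finite C" "card R = card C"
    and "\<And>r c. r \<in> R \<Longrightarrow> c \<in> C \<Longrightarrow> M r c = N r c"
  shows "subdet M R C = subdet N R C"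
proof -
  have nth_mem_set: "sorted_list_of_set S ! p \<in> S" if "finite S" "p < card S" for S :: "nat set" and p
    using that nth_mem[of p "sorted_list_of_set S"] by simp
  show ?thesis
    unfolding subdet_def Let_def using assms
    by (intro arg_cong[of _ _ det] eq_matI) (auto intro!: assms(4) nth_mem_set)
qed

lemma subdet_repl_last_col:
  assumes "finite R" "card R = card C" "C \<subseteq> {..<n}"
  shows "subdet (repl_last_col n a t) R C = subdet a R C"
  using assms finite_subset[OF assms(3)] by (intro subdet_cong) (auto simp: repl_last_col_def)

lemma subdet_drop_last_col:
  assumes "finite R" "card R = card C" "C \<subseteq> {..<n}"
  shows "subdet (drop_last_col n a) R C = subdet a R C"
  using assms finite_subset[OF assms(3)] by (intro subdet_cong) (auto simp: drop_last_col_def)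

lemma subdet_desnanot_jacobi:
  fixes M :: "nat \<Rightarrow> nat \<Rightarrow> 'a::idom"
  assumes i: "i < n" and nz: "subdet M {i+1..n} {i..n-1} \<noteq> 0"
  shows "subdet M {i..n} {i..n} * subdet M {i+2..n} {i+1..n-1} =
    subdet M {i+1..n} {i+1..n} * subdet M ({i..n} - {i+1}) {i..n-1}
    - subdet M {i+1..n} {i..n-1} * subdet M ({i..n} - {i+1}) {i+1..n}"
proof -
  define m where "m = n - i + 1"
  define C where "C = mat m m (\<lambda>(p, q). M (i + p) (i + q))"
  have m: "2 \<le> m" and m_pos: "0 < m - 1" using i by (simp_all add: m_def)
  have C: "C \<in> carrier_mat m m" by (simp add: C_def)
  have intervals: "{i..n} = {i..<i + m}" "{i+1..n} = {i+1..<i+1 + (m-1)}"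
    "{i..n-1} = {i..<i + (m-1)}" "{i+2..n} = {i+2..<i+2 + (m-2)}"
    "{i+1..n-1} = {i+1..<i+1 + (m-2)}"
    and skip: "{i..n} - {i+1} = insert i {i+2..<i+(m-1)+1}"
    using i by (auto simp: m_def)
  have "subdet M {i..n} {i..n} = det C"
    by (simp only: intervals subdet_atLeastLessThan C_def)
  moreover have "subdet M {i+1..n} {i+1..n} = det (mat_delete C 0 0)"
    unfolding intervals subdet_atLeastLessThan
    by (intro arg_cong[of _ _ det] eq_matI) (auto simp: C_def mat_delete_def)
  moreover have "subdet M {i+1..n} {i..n-1} = det (mat_delete C 0 (m - 1))"
    unfolding intervals subdet_atLeastLessThan
    by (intro arg_cong[of _ _ det] eq_matI) (auto simp: C_def mat_delete_def)
  moreover have "subdet M {i+2..n} {i+1..n-1} = det (mat_delete (mat_delete C 0 (m - 1)) 0 0)"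
    unfolding intervals subdet_atLeastLessThan
    by (intro arg_cong[of _ _ det] eq_matI) (auto simp: C_def mat_delete_def)
  moreover have "subdet M ({i..n} - {i+1}) {i..n-1} = det (mat_delete C 1 (m - 1))"
    unfolding skip unfolding intervals subdet_skip_second_row[OF m_pos]
    by (intro arg_cong[of _ _ det] eq_matI) (auto simp: C_def mat_delete_def)
  moreover have "subdet M ({i..n} - {i+1}) {i+1..n} = det (mat_delete C 1 0)"
    unfolding skip unfolding intervals subdet_skip_second_row[OF m_pos]
    by (intro arg_cong[of _ _ det] eq_matI) (auto simp: C_def mat_delete_def)
  ultimately show ?thesis
    using desnanot_jacobi_first_last_col[OF C m] nz by simp
qed

theorem lemma4p3:
  fixes n :: nat and a :: "nat \<Rightarrow> nat \<Rightarrow> 'a::field" and t :: "nat \<Rightarrow> 'a" and i :: nat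
  assumes generic: "\<And>k. 1 \<le> k \<Longrightarrow> k \<le> n \<Longrightarrow> subdet a {k+1..n} {k..n-1} \<noteq> 0"
    and tilde: "\<And>k. 1 \<le> k \<Longrightarrow> k \<le> n \<Longrightarrow>
       subdet (repl_last_col n a t) {k..n} {k..n}
         = (-1) ^ (n - k) * a k n * subdet a {k+1..n} {k..n-1}"
    and i: "1 \<le> i" "i \<le> n - 1"
    and den1: "a (i+1) n \<noteq> 0"
    and den2: "subdet (repl_last_col n a t) {i+1..n} {i+1..n} \<noteq> 0"
    and den3: "subdet (drop_last_col n a) {i+1..n} {i..n-1} \<noteq> 0"
  shows "subdet (repl_last_col n a t) ({i..n} - {i+1}) {i+1..n}
           / subdet (repl_last_col n a t) {i+1..n} {i+1..n}
         = a i n / a (i+1) n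
           + subdet (drop_last_col n a) ({i..n} - {i+1}) {i..n-1}
             / subdet (drop_last_col n a) {i+1..n} {i..n-1}"
proof -
  let ?A' = "repl_last_col n a t"
  have "i < n" using i by simp
  then have minors: "subdet ?A' {i+1..n} {i..n-1} = subdet a {i+1..n} {i..n-1}"
    "subdet ?A' {i+2..n} {i+1..n-1} = subdet a {i+2..n} {i+1..n-1}"
    "subdet ?A' ({i..n} - {i+1}) {i..n-1} = subdet a ({i..n} - {i+1}) {i..n-1}"
    "subdet (drop_last_col n a) {i+1..n} {i..n-1} = subdet a {i+1..n} {i..n-1}"
    "subdet (drop_last_col n a) ({i..n} - {i+1}) {i..n-1} = subdet a ({i..n} - {i+1}) {i..n-1}"
    by (auto intro!: subdet_repl_last_col subdet_drop_last_col)
  define \<sigma> :: 'a where "\<sigma> = (-1) ^ (n - (i + 1))"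
  have "(-1) ^ (n - i) = - \<sigma>"
    using \<open>i < n\<close> by (simp add: \<sigma>_def flip: Suc_diff_Suc)
  then have block: "subdet ?A' {i..n} {i..n} = - \<sigma> * a i n * subdet a {i+1..n} {i..n-1}"
    using tilde[of i] i by simp
  have trailing_block: "subdet ?A' {i+1..n} {i+1..n} = \<sigma> * a (i+1) n * subdet a {i+2..n} {i+1..n-1}"
    using tilde[of "i+1"] i by (simp add: \<sigma>_def)
  have "subdet ?A' {i+1..n} {i..n-1} \<noteq> 0"
    using generic[of i] i minors(1) by simp
  from subdet_desnanot_jacobi[OF \<open>i < n\<close> this]
  have "subdet a {i+1..n} {i..n-1} * subdet ?A' ({i..n} - {i+1}) {i+1..n}
      = subdet ?A' {i+1..n} {i+1..n} * subdet a ({i..n} - {i+1}) {i..n-1}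
        + a i n * subdet a {i+1..n} {i..n-1} * (\<sigma> * subdet a {i+2..n} {i+1..n-1})"
    unfolding block minors by (simp add: algebra_simps)
  then show ?thesis
    using den1 den2 den3 unfolding minors trailing_block by (simp add: field_simps)
qed

end
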